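(* Let $\mathbf K$ be a commutative field. (i) For all $p,q\in\mathbb N$, an element $X\in\mathbf K^{\mathcal M_{p\times q}}$ is a recurrence matrix if and only if it is a birecurrence matrix. (ii) The palindromic automorphism $\iota$ of $\mathbf K^{\mathcal M_{p\times q}}$ restricts to an involutive automorphism of $\mathrm{Rec}_{p\times q}(\mathbf K)$; consequently, if $\mathrm{char}\,\mathbf K\ne2$, for $A\in\mathrm{Rec}_{p\times q}(\mathbf K)$ the even and odd parts $A_+=(A+\iota A)/2$ and $A_-=(A-\iota A)/2$ lie in $\mathrm{Rec}_{p\times q}(\mathbf K)$. (iii) The palindromic automorphism yields an involutive automorphic functor of the category of recurrence matrices: it preserves each $\mathrm{Rec}_{p\times q}(\mathbf K)$ and satisfies $\iota(AB)=\iota(A)\iota(B)$ for $A\in\mathrm{Rec}_{p\times r}(\mathbf K)$, $B\in\mathrm{Rec}_{r\times q}(\mathbf K)$.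
   Context: $\mathcal M_{p\times q}$ is the monoid of pairs $(U,W)$ of words of common length with $U$ over $\{0,\dots,p-1\}$, $W$ over $\{0,\dots,q-1\}$. For $X:\mathcal M_{p\times q}\to\mathbf K$ (values $X[U,W]$): right shifts $(\rho(S,T)X)[U,W]=X[US,WT]$; left shifts $(\lambda(s_1\dots s_n,t_1\dots t_n)X)[U,W]=X[s_n\dots s_1U,t_n\dots t_1W]$. $X$ is a recurrence matrix (element of $\mathrm{Rec}_{p\times q}(\mathbf K)$) if the span of $\{\rho(S,T)X\}$ is finite-dimensional, and a birecurrence matrix if the span of $\{\lambda(S',T')\rho(S,T)X\}$ is finite-dimensional. The palindromic automorphism is $(\iota X)[s_1\dots s_n,t_1\dots t_n]=X[s_n\dots s_1,t_n\dots t_1]$. Matrix product: $(AB)[U,W]=\sum_{V\in\{0,\dots,r-1\}^l}A[U,V]B[V,W]$ for $(U,W)$ of length $l$. *)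

theory Defs
  imports Complex_Main "HOL-Library.Function_Algebras"
begin

text \<open>An element of K^{M_{p x q}} is represented as a function on pairs of lists which
  vanishes outside M_{p x q}.\<close>

definition Mpq :: "nat \<Rightarrow> nat \<Rightarrow> (nat list \<times> nat list) set" where
  "Mpq p q = {(U, W). length U = length W \<and> set U \<subseteq> {..<p} \<and> set W \<subseteq> {..<q}}"

type_synonym 'a rmat = "nat list \<times> nat list \<Rightarrow> 'a"

definition is_mat :: "nat \<Rightarrow> nat \<Rightarrow> 'a::zero rmat \<Rightarrow> bool" where
  "is_mat p q X \<longleftrightarrow> (\<forall>x. x \<notin> Mpq p q \<longrightarrow> X x = 0)"

definition mscale :: "'a::times \<Rightarrow> 'a rmat \<Rightarrow> 'a rmat" where
  "mscale c X = (\<lambda>x. c * X x)"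

definition fin_dim_span :: "'a::field rmat set \<Rightarrow> bool" where
  "fin_dim_span S \<longleftrightarrow> (\<exists>B. finite B \<and> module.span mscale S \<subseteq> module.span mscale B)"

definition rshift :: "nat \<Rightarrow> nat \<Rightarrow> nat list \<Rightarrow> nat list \<Rightarrow> 'a::zero rmat \<Rightarrow> 'a rmat" where
  "rshift p q S T X = (\<lambda>(U, W). if (U, W) \<in> Mpq p q then X (U @ S, W @ T) else 0)"

definition lshift :: "nat \<Rightarrow> nat \<Rightarrow> nat list \<Rightarrow> nat list \<Rightarrow> 'a::zero rmat \<Rightarrow> 'a rmat" where
  "lshift p q S T X = (\<lambda>(U, W). if (U, W) \<in> Mpq p q then X (rev S @ U, rev T @ W) else 0)"

definition is_rec :: "nat \<Rightarrow> nat \<Rightarrow> 'a::field rmat \<Rightarrow> bool" where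
  "is_rec p q X \<longleftrightarrow> is_mat p q X \<and>
     fin_dim_span {rshift p q S T X | S T. (S, T) \<in> Mpq p q}"

definition is_birec :: "nat \<Rightarrow> nat \<Rightarrow> 'a::field rmat \<Rightarrow> bool" where
  "is_birec p q X \<longleftrightarrow> is_mat p q X \<and>
     fin_dim_span {lshift p q S' T' (rshift p q S T X) | S T S' T'.
                     (S, T) \<in> Mpq p q \<and> (S', T') \<in> Mpq p q}"

definition iota :: "'a rmat \<Rightarrow> 'a rmat" where
  "iota X = (\<lambda>(U, W). X (rev U, rev W))"

definition mprod :: "nat \<Rightarrow> nat \<Rightarrow> nat \<Rightarrow> 'a::comm_semiring_0 rmat \<Rightarrow> 'a rmat \<Rightarrow> 'a rmat" where
  "mprod p r q A B = (\<lambda>(U, W). if (U, W) \<in> Mpq p q then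
      (\<Sum>V\<in>{V. length V = length U \<and> set V \<subseteq> {..<r}}. A (U, V) * B (V, W)) else 0)"

end

theory Submission
  imports Defs
begin

text \<open>For (U, W), (S, T) in M_{p x q} we have
  (rho(S,T) X)[U,W] = X[US,WT] = (lambda(rev U, rev W) X)[S,T]:
  the right shifts of X are the rows and its left shifts the columns of one and the same kernel,
  so one family spans a finite-dimensional space iff the other does. Since left and right shifts
  commute, each two-sided shift of a recurrence matrix is a combination of right shifts, by a fixed
  finite set of words, of left shifts of X; so these span a finite-dimensional space as well.
  The palindromic map iota exchanges left and right shifts, which makes Rec invariant under it,
  and reversing the summation word V is a bijection, which gives iota (A B) = iota A iota B.\<close>

interpretation rmat: vector_space "mscale :: 'a::field \<Rightarrow> 'a rmat \<Rightarrow> 'a rmat"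
  by unfold_locales (auto simp: mscale_def fun_eq_iff algebra_simps)

lemma sum_rmat_apply: "(\<Sum>b\<in>B. f b :: 'a::comm_monoid_add rmat) x = (\<Sum>b\<in>B. f b x)"
  by (induction B rule: infinite_finite_induct) auto

lemma fin_dim_span_iff: "fin_dim_span S \<longleftrightarrow> (\<exists>B. finite B \<and> S \<subseteq> rmat.span B)"
proof
  assume "fin_dim_span S"
  then obtain B where "finite B" "rmat.span S \<subseteq> rmat.span B"
    unfolding fin_dim_span_def by blast
  then show "\<exists>B. finite B \<and> S \<subseteq> rmat.span B"
    using rmat.span_superset[of S] by blast
next
  assume "\<exists>B. finite B \<and> S \<subseteq> rmat.span B"
  then show "fin_dim_span S"
    unfolding fin_dim_span_def using rmat.span_minimal[OF _ rmat.subspace_span] by blast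
qed

lemma fin_dim_span_subset:
  assumes "fin_dim_span T" "S \<subseteq> rmat.span T"
  shows "fin_dim_span S"
  using assms rmat.span_minimal[OF _ rmat.subspace_span] unfolding fin_dim_span_iff by blast

lemma fin_dim_span_Un:
  assumes "fin_dim_span S" "fin_dim_span T"
  shows "fin_dim_span (S \<union> T)"
proof -
  obtain B where B: "finite B" "S \<subseteq> rmat.span B"
    using assms(1) fin_dim_span_iff by blast
  obtain C where C: "finite C" "T \<subseteq> rmat.span C"
    using assms(2) fin_dim_span_iff by blast
  have "S \<union> T \<subseteq> rmat.span (B \<union> C)"
    using B(2) C(2) rmat.span_mono[of B "B \<union> C"] rmat.span_mono[of C "B \<union> C"] by blast
  with B(1) C(1) show ?thesis
    unfolding fin_dim_span_iff by blast
qed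

lemma fin_dim_span_spanning_subset:
  assumes "fin_dim_span S"
  obtains F where "finite F" "F \<subseteq> S" "S \<subseteq> rmat.span F"
proof -
  obtain B where B: "finite B" "S \<subseteq> rmat.span B"
    using assms fin_dim_span_iff by blast
  obtain F where F: "F \<subseteq> S" "rmat.independent F" "S \<subseteq> rmat.span F"
    using rmat.maximal_independent_subset by blast
  have "finite F"
    using rmat.independent_span_bound[OF B(1) F(2)] F(1) B(2) by blast
  with F that show ?thesis by blast
qed

lemma fin_dim_span_linear_image:
  assumes "module_hom mscale mscale L" "fin_dim_span S"
  shows "fin_dim_span (L ` S)"
proof -
  obtain B where B: "finite B" "S \<subseteq> rmat.span B"
    using assms(2) fin_dim_span_iff by blast
  then have "L ` S \<subseteq> rmat.span (L ` B)"
    using module_hom.span_image[OF assms(1)] by blast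
  with B(1) show ?thesis
    unfolding fin_dim_span_iff by blast
qed

text \<open>Row rank equals column rank for a kernel (x, i) \<mapsto> R x (\<tau> i): expanding each row R x
  in a finite spanning set B writes every column as a combination of the |B| coefficient functions.\<close>

lemma fin_dim_span_transpose:
  fixes R :: "nat list \<times> nat list \<Rightarrow> 'a::field rmat" and C :: "'i \<Rightarrow> 'a rmat"
  assumes rows: "fin_dim_span (R ` D)"
    and cols: "\<And>i x. i \<in> I \<Longrightarrow> x \<in> D \<Longrightarrow> C i x = R x (\<tau> i)"
    and cols_zero: "\<And>i x. i \<in> I \<Longrightarrow> x \<notin> D \<Longrightarrow> C i x = 0"
  shows "fin_dim_span (C ` I)"
proof -
  obtain B where B: "finite B" "R ` D \<subseteq> rmat.span B"
    using rows fin_dim_span_iff by blast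
  have "\<forall>x\<in>D. \<exists>c. R x = (\<Sum>b\<in>B. mscale (c b) b)"
    using B rmat.span_finite by blast
  then obtain c where c: "\<forall>x\<in>D. R x = (\<Sum>b\<in>B. mscale (c x b) b)"
    by (rule bchoice[THEN exE])
  define a where "a b x = (if x \<in> D then c x b else 0)" for b x
  have "C i = (\<Sum>b\<in>B. mscale (b (\<tau> i)) (a b))" if "i \<in> I" for i
  proof
    fix x
    show "C i x = (\<Sum>b\<in>B. mscale (b (\<tau> i)) (a b)) x"
      using that c cols[of i x] cols_zero[of i x]
      by (cases "x \<in> D") (simp_all add: a_def sum_rmat_apply mscale_def mult.commute)
  qed
  moreover have "(\<Sum>b\<in>B. mscale (k b) (a b)) \<in> rmat.span (a ` B)" for k
    by (intro rmat.span_sum rmat.span_scale rmat.span_base imageI)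
  ultimately have "C ` I \<subseteq> rmat.span (a ` B)"
    by auto
  with B(1) show ?thesis
    unfolding fin_dim_span_iff by blast
qed

lemma Mpq_rev [simp]: "(rev U, rev W) \<in> Mpq p q \<longleftrightarrow> (U, W) \<in> Mpq p q"
  by (auto simp: Mpq_def)

lemma Mpq_append: "(U, W) \<in> Mpq p q \<Longrightarrow> (S, T) \<in> Mpq p q \<Longrightarrow> (U @ S, W @ T) \<in> Mpq p q"
  by (auto simp: Mpq_def)

lemma iota_iota [simp]: "iota (iota X) = X"
  by (auto simp: iota_def fun_eq_iff)

lemma iota_add: "iota (X + Y) = iota X + iota Y"
  by (auto simp: iota_def fun_eq_iff)

lemma iota_mscale: "iota (mscale c X) = mscale c (iota X)"
  by (auto simp: iota_def mscale_def fun_eq_iff)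

lemma module_hom_iota: "module_hom mscale mscale (iota :: 'a::field rmat \<Rightarrow> 'a rmat)"
  by unfold_locales (simp_all add: iota_add iota_mscale)

lemma module_hom_rshift: "module_hom mscale mscale (rshift p q S T :: 'a::field rmat \<Rightarrow> 'a rmat)"
  by unfold_locales (auto simp: rshift_def mscale_def fun_eq_iff)

lemma module_hom_lshift: "module_hom mscale mscale (lshift p q S T :: 'a::field rmat \<Rightarrow> 'a rmat)"
  by unfold_locales (auto simp: lshift_def mscale_def fun_eq_iff)

lemma lshift_rshift_commute:
  assumes "(S, T) \<in> Mpq p q" "(S', T') \<in> Mpq p q"
  shows "lshift p q S' T' (rshift p q S T X) = rshift p q S T (lshift p q S' T' X)"
  using assms by (auto simp: lshift_def rshift_def fun_eq_iff Mpq_append)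

definition rshifts :: "nat \<Rightarrow> nat \<Rightarrow> 'a::zero rmat \<Rightarrow> 'a rmat set" where
  "rshifts p q X = {rshift p q S T X | S T. (S, T) \<in> Mpq p q}"

definition lshifts :: "nat \<Rightarrow> nat \<Rightarrow> 'a::zero rmat \<Rightarrow> 'a rmat set" where
  "lshifts p q X = {lshift p q S T X | S T. (S, T) \<in> Mpq p q}"

lemma is_rec_iff: "is_rec p q X \<longleftrightarrow> is_mat p q X \<and> fin_dim_span (rshifts p q X)"
  by (simp add: is_rec_def rshifts_def)

lemma is_birec_iff:
  "is_birec p q X \<longleftrightarrow> is_mat p q X \<and> fin_dim_span (\<Union>Y\<in>rshifts p q X. lshifts p q Y)"
proof -
  have "{lshift p q S' T' (rshift p q S T X) | S T S' T'. (S, T) \<in> Mpq p q \<and> (S', T') \<in> Mpq p q}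
      = (\<Union>Y\<in>rshifts p q X. lshifts p q Y)"
    by (auto simp: rshifts_def lshifts_def)
  then show ?thesis
    by (simp add: is_birec_def)
qed

lemma rshifts_image: "rshifts p q X = (\<lambda>(S, T). rshift p q S T X) ` Mpq p q"
  by (auto simp: rshifts_def)

lemma lshifts_image: "lshifts p q X = (\<lambda>(S, T). lshift p q S T X) ` Mpq p q"
  by (auto simp: lshifts_def)

lemma rshifts_iota: "rshifts p q (iota X) = iota ` lshifts p q X"
proof -
  have "rshift p q S T (iota X) = iota (lshift p q S T X)" for S T
    by (auto simp: rshift_def lshift_def iota_def fun_eq_iff)
  then show ?thesis
    by (auto simp: rshifts_def lshifts_def)
qed

lemma lshifts_iota: "lshifts p q (iota X) = iota ` rshifts p q X"
proof -
  have "lshift p q S T (iota X) = iota (rshift p q S T X)" for S T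
    by (auto simp: rshift_def lshift_def iota_def fun_eq_iff)
  then show ?thesis
    by (auto simp: rshifts_def lshifts_def)
qed

lemma fin_dim_span_iota_image_iff:
  "fin_dim_span (iota ` S) \<longleftrightarrow> fin_dim_span (S :: 'a::field rmat set)"
proof
  assume "fin_dim_span (iota ` S)"
  then have "fin_dim_span (iota ` iota ` S)"
    by (rule fin_dim_span_linear_image[OF module_hom_iota])
  then show "fin_dim_span S"
    by (simp add: image_image)
qed (rule fin_dim_span_linear_image[OF module_hom_iota])

lemma fin_dim_span_lshifts_if_rshifts:
  assumes "fin_dim_span (rshifts p q (X :: 'a::field rmat))"
  shows "fin_dim_span (lshifts p q X)"
  unfolding lshifts_image
proof (rule fin_dim_span_transpose)
  show "fin_dim_span ((\<lambda>(S, T). rshift p q S T X) ` Mpq p q)"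
    using assms by (simp add: rshifts_image)
  show "(\<lambda>(S, T). lshift p q S T X) i x
      = (\<lambda>(S, T). rshift p q S T X) x ((\<lambda>(S, T). (rev S, rev T)) i)"
    if "i \<in> Mpq p q" "x \<in> Mpq p q" for i x
    using that by (cases i, cases x) (simp add: lshift_def rshift_def)
  show "(\<lambda>(S, T). lshift p q S T X) i x = 0" if "x \<notin> Mpq p q" for i x
    using that by (cases i, cases x) (simp add: lshift_def)
qed

lemma fin_dim_span_lshifts_iff_rshifts:
  "fin_dim_span (lshifts p q X) \<longleftrightarrow> fin_dim_span (rshifts p q (X :: 'a::field rmat))"
proof
  assume "fin_dim_span (lshifts p q X)"
  then have "fin_dim_span (rshifts p q (iota X))"
    by (simp add: rshifts_iota fin_dim_span_iota_image_iff)
  then have "fin_dim_span (lshifts p q (iota X))"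
    by (rule fin_dim_span_lshifts_if_rshifts)
  then show "fin_dim_span (rshifts p q X)"
    by (simp add: lshifts_iota fin_dim_span_iota_image_iff)
qed (rule fin_dim_span_lshifts_if_rshifts)

lemma fin_dim_span_bishifts:
  fixes X :: "'a::field rmat"
  assumes rec: "fin_dim_span (rshifts p q X)"
  shows "fin_dim_span (\<Union>Y\<in>rshifts p q X. lshifts p q Y)"
proof -
  obtain F where F: "finite F" "F \<subseteq> rshifts p q X" "rshifts p q X \<subseteq> rmat.span F"
    using fin_dim_span_spanning_subset[OF rec] by blast
  obtain \<Sigma> where \<Sigma>: "finite \<Sigma>" "\<Sigma> \<subseteq> Mpq p q" "F = (\<lambda>(S, T). rshift p q S T X) ` \<Sigma>"
    using finite_subset_image[OF F(1) F(2)[unfolded rshifts_image]] by blast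
  have "fin_dim_span (lshifts p q X)"
    using rec by (simp add: fin_dim_span_lshifts_iff_rshifts)
  then obtain E where E: "finite E" "lshifts p q X \<subseteq> rmat.span E"
    unfolding fin_dim_span_iff by blast
  define G where "G = (\<Union>(S, T)\<in>\<Sigma>. rshift p q S T ` E)"
  have "lshift p q S' T' f \<in> rmat.span G"
    if "f \<in> F" and S'T': "(S', T') \<in> Mpq p q" for f S' T'
  proof -
    obtain S T where ST: "(S, T) \<in> \<Sigma>" "f = rshift p q S T X"
      using \<open>f \<in> F\<close> \<Sigma>(3) by auto
    have ST_Mpq: "(S, T) \<in> Mpq p q"
      using ST(1) \<Sigma>(2) by blast
    have "lshift p q S' T' X \<in> rmat.span E"
      using E(2) S'T' by (auto simp: lshifts_def)
    then have "rshift p q S T (lshift p q S' T' X) \<in> rmat.span (rshift p q S T ` E)"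
      using module_hom.span_image[OF module_hom_rshift] by blast
    also have "\<dots> \<subseteq> rmat.span G"
      using ST(1) by (auto simp: G_def intro!: rmat.span_mono)
    finally show ?thesis
      using ST(2) by (simp add: lshift_rshift_commute[OF ST_Mpq S'T'])
  qed
  then have "lshift p q S' T' ` rmat.span F \<subseteq> rmat.span G" if "(S', T') \<in> Mpq p q" for S' T'
    using that by (simp add: module_hom.span_image[OF module_hom_lshift, symmetric]
        rmat.span_minimal image_subset_iff)
  then have "(\<Union>Y\<in>rshifts p q X. lshifts p q Y) \<subseteq> rmat.span G"
    using F(3) by (fastforce simp: lshifts_def)
  moreover have "finite G"
    using \<Sigma>(1) E(1) by (auto simp: G_def)
  ultimately show ?thesis
    unfolding fin_dim_span_iff by blast
qed

lemma rshifts_subset_bishifts: "rshifts p q X \<subseteq> (\<Union>Y\<in>rshifts p q X. lshifts p q Y)"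
proof
  fix Y assume Y: "Y \<in> rshifts p q X"
  then obtain S T where "Y = rshift p q S T X"
    by (auto simp: rshifts_def)
  then have "lshift p q [] [] Y = Y"
    by (auto simp: lshift_def rshift_def fun_eq_iff)
  then have "Y \<in> lshifts p q Y"
    unfolding lshifts_image by (intro image_eqI[of _ _ "([], [])"]) (simp_all add: Mpq_def)
  with Y show "Y \<in> (\<Union>Y\<in>rshifts p q X. lshifts p q Y)"
    by blast
qed

lemma is_rec_iff_is_birec: "is_rec p q X \<longleftrightarrow> is_birec p q (X :: 'a::field rmat)"
proof -
  have "fin_dim_span (rshifts p q X) \<longleftrightarrow> fin_dim_span (\<Union>Y\<in>rshifts p q X. lshifts p q Y)"
  proof
    show "fin_dim_span (\<Union>Y\<in>rshifts p q X. lshifts p q Y)" if "fin_dim_span (rshifts p q X)"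
      using that by (rule fin_dim_span_bishifts)
    show "fin_dim_span (rshifts p q X)" if "fin_dim_span (\<Union>Y\<in>rshifts p q X. lshifts p q Y)"
      using that rshifts_subset_bishifts rmat.span_superset
      by (rule fin_dim_span_subset[OF _ order_trans])
  qed
  then show ?thesis
    by (simp add: is_rec_iff is_birec_iff)
qed

lemma is_mat_iota: "is_mat p q A \<Longrightarrow> is_mat p q (iota A)"
  by (auto simp: is_mat_def iota_def split: prod.split)

lemma is_mat_iota_iff: "is_mat p q (iota A) \<longleftrightarrow> is_mat p q A"
  using is_mat_iota[of p q A] is_mat_iota[of p q "iota A"] by auto

lemma is_rec_iota_iff: "is_rec p q (iota A) \<longleftrightarrow> is_rec p q (A :: 'a::field rmat)"
  by (simp add: is_rec_iff is_mat_iota_iff rshifts_iota fin_dim_span_iota_image_iff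
      fin_dim_span_lshifts_iff_rshifts)

lemma is_rec_add:
  assumes A: "is_rec p q A" and B: "is_rec p q (B :: 'a::field rmat)"
  shows "is_rec p q (A + B)"
proof -
  have "rshift p q S T (A + B) \<in> rmat.span (rshifts p q A \<union> rshifts p q B)"
    if "(S, T) \<in> Mpq p q" for S T
  proof -
    have "rshift p q S T A \<in> rshifts p q A" "rshift p q S T B \<in> rshifts p q B"
      using that by (auto simp: rshifts_def)
    then show ?thesis
      by (simp add: module_hom.add[OF module_hom_rshift] rmat.span_add rmat.span_base)
  qed
  then have "rshifts p q (A + B) \<subseteq> rmat.span (rshifts p q A \<union> rshifts p q B)"
    unfolding rshifts_def[of p q "A + B"] by blast
  moreover have "fin_dim_span (rshifts p q A \<union> rshifts p q B)"
    using A B by (simp add: is_rec_iff fin_dim_span_Un)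
  ultimately have "fin_dim_span (rshifts p q (A + B))"
    by (rule fin_dim_span_subset[rotated])
  moreover have "is_mat p q (A + B)"
    using A B by (simp add: is_rec_iff is_mat_def)
  ultimately show ?thesis
    by (simp add: is_rec_iff)
qed

lemma is_rec_mscale:
  assumes A: "is_rec p q (A :: 'a::field rmat)"
  shows "is_rec p q (mscale c A)"
proof -
  have "rshift p q S T (mscale c A) \<in> rmat.span (rshifts p q A)"
    if "(S, T) \<in> Mpq p q" for S T
  proof -
    have "rshift p q S T A \<in> rshifts p q A"
      using that by (auto simp: rshifts_def)
    then show ?thesis
      by (simp add: module_hom.scale[OF module_hom_rshift] rmat.span_scale rmat.span_base)
  qed
  then have "rshifts p q (mscale c A) \<subseteq> rmat.span (rshifts p q A)"
    unfolding rshifts_def[of p q "mscale c A"] by blast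
  then have "fin_dim_span (rshifts p q (mscale c A))"
    using A unfolding is_rec_iff by (blast intro: fin_dim_span_subset)
  moreover have "is_mat p q (mscale c A)"
    using A by (simp add: is_rec_iff is_mat_def mscale_def)
  ultimately show ?thesis
    by (simp add: is_rec_iff)
qed

lemma is_rec_diff:
  assumes A: "is_rec p q A" and B: "is_rec p q (B :: 'a::field rmat)"
  shows "is_rec p q (A - B)"
proof -
  have "A - B = A + mscale (-1) B"
    by (simp add: mscale_def fun_eq_iff)
  then show ?thesis
    using is_rec_add[OF A is_rec_mscale[OF B]] by (simp only:)
qed

lemma iota_mprod: "iota (mprod p r q A B) = mprod p r q (iota A) (iota B)"
proof (rule ext, clarify)
  fix U W :: "nat list"
  let ?V = "{V. length V = length U \<and> set V \<subseteq> {..<r}}"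
  have "(\<Sum>V\<in>?V. A (rev U, V) * B (V, rev W)) = (\<Sum>V\<in>?V. A (rev U, rev V) * B (rev V, rev W))"
    by (rule sum.reindex_bij_witness[of _ rev rev]) auto
  then show "iota (mprod p r q A B) (U, W) = mprod p r q (iota A) (iota B) (U, W)"
    by (simp add: iota_def mprod_def)
qed

theorem mainTheorem15:
  fixes K_witness :: "'a::field itself"
  shows
   "(\<forall>p q (X :: 'a rmat). is_mat p q X \<longrightarrow> (is_rec p q X \<longleftrightarrow> is_birec p q X))
    \<and> (\<forall>p q (A :: 'a rmat) B c. is_mat p q A \<longrightarrow> is_mat p q (iota A)
          \<and> iota (iota A) = A
          \<and> iota (A + B) = iota A + iota B
          \<and> iota (mscale c A) = mscale c (iota A)
          \<and> (is_rec p q (iota A) \<longleftrightarrow> is_rec p q A))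
    \<and> (\<forall>p q (A :: 'a rmat). (2::'a) \<noteq> 0 \<longrightarrow> is_rec p q A \<longrightarrow>
          is_rec p q (mscale (1/2) (A + iota A)) \<and> is_rec p q (mscale (1/2) (A - iota A)))
    \<and> (\<forall>p r q (A :: 'a rmat) B. is_rec p r A \<longrightarrow> is_rec r q B \<longrightarrow>
          iota (mprod p r q A B) = mprod p r q (iota A) (iota B))"
proof -
  have "is_rec p q (mscale (1/2) (A + iota A)) \<and> is_rec p q (mscale (1/2) (A - iota A))"
    if "is_rec p q A" for p q and A :: "'a rmat"
    using that by (simp add: is_rec_mscale is_rec_add is_rec_diff is_rec_iota_iff)
  then show ?thesis
    by (simp add: is_rec_iff_is_birec[symmetric] is_mat_iota_iff iota_add iota_mscale
        is_rec_iota_iff iota_mprod)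
qed

end
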